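(* For every instance of (edge-weighted) online stochastic matching in the Poisson arrival model and every level $\ell\ge0$, the expected weight of a maximum-weight matching of the realized bipartite graph is at most the optimal value of the $\ell$-th level Poisson Matching LP.
   Context: Poisson arrival model: $I$ is a finite set of online types and $J$ a finite set of offline vertices, with edges $E\subseteq I\times J$ and weights $w_{ij}>0$. Type $i$ arrives by an independent Poisson process of rate $\lambda_i>0$ on $[0,1]$, and $\lambda_S=\sum_{i\in S}\lambda_i$. $P_k(\lambda)=e^{-\lambda}\sum_{m=0}^k\lambda^m/m!$ is the Poisson CDF. For $\ell\ge1$, the $\ell$-th level Poisson Matching LP is: maximize $\sum_{(i,j)\in E}w_{ij}x_{ij}$ subject to - $x_{ij}\ge0$; - $\sum_{j}x_{ij}\le\lambda_i$ for all $i\in I$; - for every $1\le m\le\ell$, every $S\subseteq I$ and every $T\subseteq J$ with $|T|=m$: $\sum_{i\in S}\sum_{j\in T}x_{ij}\le\sum_{k=1}^m(1-P_{k-1}(\lambda_S))$. Here $x_{ij}=0$ for non-edges. The $0$-th level is the matching LP: maximize $\sum w_{ij}x_{ij}$ subject to $\sum_jx_{ij}\le\lambda_i$, $\sum_ix_{ij}\le1$, and $x\ge0$. *)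

theory Defs
  imports "HOL-Probability.Probability"
begin

definition poisson_cdf :: "nat \<Rightarrow> real \<Rightarrow> real" where
  "poisson_cdf k lam = exp (- lam) * (\<Sum>m\<le>k. lam ^ m / fact m)"

definition poisson_lp_feasible ::
  "'i set \<Rightarrow> 'j set \<Rightarrow> ('i \<times> 'j) set \<Rightarrow> ('i \<Rightarrow> real) \<Rightarrow> nat \<Rightarrow> ('i \<Rightarrow> 'j \<Rightarrow> real) set" where
  "poisson_lp_feasible I J E lam l =
     {x. (\<forall>i j. x i j \<ge> 0) \<and> (\<forall>i j. (i, j) \<notin> E \<longrightarrow> x i j = 0) \<and>
         (\<forall>i\<in>I. (\<Sum>j\<in>J. x i j) \<le> lam i) \<and>
         (if l = 0 then (\<forall>j\<in>J. (\<Sum>i\<in>I. x i j) \<le> 1)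
          else (\<forall>m. 1 \<le> m \<and> m \<le> l \<longrightarrow> (\<forall>S\<subseteq>I. \<forall>T\<subseteq>J. card T = m \<longrightarrow>
                 (\<Sum>i\<in>S. \<Sum>j\<in>T. x i j) \<le>
                 (\<Sum>k=1..m. 1 - poisson_cdf (k - 1) (\<Sum>i\<in>S. lam i)))))}"

definition lp_objective :: "('i \<times> 'j) set \<Rightarrow> ('i \<Rightarrow> 'j \<Rightarrow> real) \<Rightarrow> ('i \<Rightarrow> 'j \<Rightarrow> real) \<Rightarrow> real" where
  "lp_objective E w x = (\<Sum>(i, j)\<in>E. w i j * x i j)"

definition poisson_lp_opt ::
  "'i set \<Rightarrow> 'j set \<Rightarrow> ('i \<times> 'j) set \<Rightarrow> ('i \<Rightarrow> 'j \<Rightarrow> real) \<Rightarrow> ('i \<Rightarrow> real) \<Rightarrow> nat \<Rightarrow> real" where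
  "poisson_lp_opt I J E w lam l = (SUP x \<in> poisson_lp_feasible I J E lam l. lp_objective E w x)"

text \<open>Realized bipartite graph for arrival counts N: online vertices (i,k) with k < N i
  (the k-th arrival of type i), offline vertices J, edge ((i,k),j) iff (i,j) in E,
  with weight w i j.\<close>
definition realized_matchings ::
  "('i \<times> 'j) set \<Rightarrow> ('i \<Rightarrow> nat) \<Rightarrow> ((('i \<times> nat) \<times> 'j) set) set" where
  "realized_matchings E N =
     {M. M \<subseteq> {((i, k), j). (i, j) \<in> E \<and> k < N i} \<and>
         (\<forall>e\<in>M. \<forall>e'\<in>M. fst e = fst e' \<longrightarrow> e = e') \<and>
         (\<forall>e\<in>M. \<forall>e'\<in>M. snd e = snd e' \<longrightarrow> e = e')}"

definition matching_weight :: "('i \<Rightarrow> 'j \<Rightarrow> real) \<Rightarrow> (('i \<times> nat) \<times> 'j) set \<Rightarrow> real" where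
  "matching_weight w M = (\<Sum>((i, k), j)\<in>M. w i j)"

definition max_weight_matching :: "('i \<times> 'j) set \<Rightarrow> ('i \<Rightarrow> 'j \<Rightarrow> real) \<Rightarrow> ('i \<Rightarrow> nat) \<Rightarrow> real" where
  "max_weight_matching E w N = Max (matching_weight w ` realized_matchings E N)"

definition arrival_counts :: "'i set \<Rightarrow> ('i \<Rightarrow> real) \<Rightarrow> ('i \<Rightarrow> nat) pmf" where
  "arrival_counts I lam = Pi_pmf I 0 (\<lambda>i. poisson_pmf (lam i))"

end

theory Submission
  imports Defs
begin

text \<open>Fix for every arrival vector N a maximum-weight matching M N of the realized graph
  and let x i j be the expected number of its edges joining an arrival of type i to the offline
  vertex j; the objective value of x is then the expected optimum. The point x is feasible: a
  matching has at most min(N(S), |T|) edges between the arrivals of the types in S and the offline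
  vertices in T, the count N(S) is Poisson with mean lam(S), and for a Poisson variable X of
  mean mu one has E min(X, m) = sum_{k=1..m} (1 - P_{k-1}(mu)) <= mu.\<close>

lemma poisson_pmf_add:
  assumes "0 < a" "0 < b"
  shows "map_pmf (\<lambda>(x, y). x + y) (pair_pmf (poisson_pmf a) (poisson_pmf b)) = poisson_pmf (a + b)"
proof (rule pmf_eqI)
  fix n :: nat
  have preimage: "(\<lambda>(x, y). x + y) -` {n} = (\<lambda>k. (k, n - k)) ` {..n}"
    by (auto simp: image_iff)
  have inj: "inj_on (\<lambda>k. (k, n - k)) {..n}"
    by (auto simp: inj_on_def)
  have "pmf (map_pmf (\<lambda>(x, y). x + y) (pair_pmf (poisson_pmf a) (poisson_pmf b))) n
      = (\<Sum>k\<le>n. pmf (poisson_pmf a) k * pmf (poisson_pmf b) (n - k))"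
    by (simp add: pmf_map preimage measure_measure_pmf_finite sum.reindex[OF inj] pmf_pair)
  also have "\<dots> = exp (- (a + b)) / fact n * (\<Sum>k\<le>n. of_nat (n choose k) * a ^ k * b ^ (n - k))"
    unfolding sum_distrib_left
    using assms by (intro sum.cong refl) (simp add: binomial_fact exp_add[symmetric] field_simps exp_diff)
  also have "\<dots> = pmf (poisson_pmf (a + b)) n"
    using assms by (simp add: binomial_ring)
  finally show "pmf (map_pmf (\<lambda>(x, y). x + y) (pair_pmf (poisson_pmf a) (poisson_pmf b))) n
      = pmf (poisson_pmf (a + b)) n" .
qed

lemma Pi_pmf_poisson_sum:
  assumes "finite S" "S \<noteq> {}" "\<forall>i\<in>S. 0 < lam i"
  shows "map_pmf (\<lambda>N. \<Sum>i\<in>S. N i) (Pi_pmf S 0 (\<lambda>i. poisson_pmf (lam i)))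
           = poisson_pmf (\<Sum>i\<in>S. lam i)"
  using assms
proof (induction S rule: finite_ne_induct)
  case (singleton x)
  show ?case by (simp add: Pi_pmf_singleton pmf.map_comp o_def)
next
  case (insert x F)
  have upd: "(\<Sum>i\<in>F. (f(x := y)) i) = (\<Sum>i\<in>F. f i)" for f :: "_ \<Rightarrow> nat" and y
    using insert.hyps by (intro sum.cong) auto
  have "map_pmf (\<lambda>N. \<Sum>i\<in>insert x F. N i) (Pi_pmf (insert x F) 0 (\<lambda>i. poisson_pmf (lam i)))
      = map_pmf (\<lambda>(y, z). y + z)
          (pair_pmf (poisson_pmf (lam x)) (map_pmf (\<lambda>N. \<Sum>i\<in>F. N i) (Pi_pmf F 0 (\<lambda>i. poisson_pmf (lam i)))))"
    using insert.hyps
    by (simp add: Pi_pmf_insert pair_map_pmf2 pmf.map_comp o_def case_prod_unfold upd fun_upd_same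
        del: fun_upd_apply)
  also have "\<dots> = poisson_pmf (lam x + (\<Sum>i\<in>F. lam i))"
    using insert by (simp add: poisson_pmf_add sum_pos)
  finally show ?case
    using insert.hyps by simp
qed

lemma of_nat_min_eq_sum_indicator:
  "real (min n m) = (\<Sum>k=1..m. 1 - indicator {..k - 1} n)"
proof (induction m)
  case (Suc m)
  have "real (min n (Suc m)) = real (min n m) + (1 - indicator {..m} n)"
    by (auto simp: indicator_def)
  then show ?case
    using Suc by simp
qed simp

lemma expectation_min_eq_sum_tails:
  "measure_pmf.expectation p (\<lambda>n. real (min n m))
     = (\<Sum>k=1..m. 1 - measure_pmf.prob p {..k - 1})"
proof -
  have integrable: "integrable (measure_pmf p) (\<lambda>n. 1 - indicator A n :: real)" for A
    by (rule measure_pmf.integrable_const_bound[where B = 1]) (auto simp: indicator_def)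
  have "measure_pmf.expectation p (\<lambda>n. real (min n m))
      = (\<Sum>k=1..m. measure_pmf.expectation p (\<lambda>n. 1 - indicator {..k - 1} n))"
    unfolding of_nat_min_eq_sum_indicator by (intro Bochner_Integration.integral_sum integrable)
  also have "\<dots> = (\<Sum>k=1..m. 1 - measure_pmf.prob p {..k - 1})"
    by (subst Bochner_Integration.integral_diff)
      (auto intro: measure_pmf.integrable_const_bound[where B = 1])
  finally show ?thesis .
qed

lemma poisson_pmf_prob_atMost:
  "0 < mu \<Longrightarrow> measure_pmf.prob (poisson_pmf mu) {..k} = poisson_cdf k mu"
  by (simp add: measure_measure_pmf_finite poisson_cdf_def sum_distrib_left mult.commute)

lemma poisson_expectation_min:
  "0 < mu \<Longrightarrow> measure_pmf.expectation (poisson_pmf mu) (\<lambda>n. real (min n m))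
                = (\<Sum>k=1..m. 1 - poisson_cdf (k - 1) mu)"
  by (simp add: expectation_min_eq_sum_tails poisson_pmf_prob_atMost)

lemma nn_integral_poisson_pmf:
  assumes "0 < mu"
  shows "(\<integral>\<^sup>+n. ennreal (real n) \<partial>measure_pmf (poisson_pmf mu)) = ennreal mu"
proof -
  have "(\<lambda>n. mu ^ n / fact n) sums exp mu"
    using exp_converges[of mu] by (simp add: divide_inverse mult.commute)
  then have "(\<lambda>n. mu * exp (- mu) * (mu ^ n / fact n)) sums (mu * exp (- mu) * exp mu)"
    by (rule sums_mult)
  then have "(\<lambda>n. mu * exp (- mu) * (mu ^ n / fact n)) sums mu"
    by (simp add: exp_minus field_simps)
  moreover have "pmf (poisson_pmf mu) (Suc n) * real (Suc n) = mu * exp (- mu) * (mu ^ n / fact n)" for n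
    using assms by (simp add: field_simps del: of_nat_Suc)
  ultimately have "(\<lambda>n. pmf (poisson_pmf mu) (Suc n) * real (Suc n)) sums mu"
    by simp
  then have mean: "(\<lambda>n. pmf (poisson_pmf mu) n * real n) sums mu"
    by (subst (asm) sums_Suc_iff) simp
  have "(\<integral>\<^sup>+n. ennreal (real n) \<partial>measure_pmf (poisson_pmf mu))
      = (\<Sum>n. ennreal (pmf (poisson_pmf mu) n * real n))"
    by (simp add: nn_integral_measure_pmf ennreal_mult nn_integral_count_space_nat)
  also have "\<dots> = ennreal mu"
    using mean by (simp add: suminf_ennreal2 sums_iff)
  finally show ?thesis .
qed

lemma poisson_expectation_min_le:
  assumes "0 < mu"
  shows "measure_pmf.expectation (poisson_pmf mu) (\<lambda>n. real (min n m)) \<le> mu"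
proof -
  have "measure_pmf.expectation (poisson_pmf mu) (\<lambda>n. real (min n m))
      = enn2real (\<integral>\<^sup>+n. ennreal (real (min n m)) \<partial>measure_pmf (poisson_pmf mu))"
    by (rule integral_eq_nn_integral) auto
  also have "\<dots> \<le> enn2real (\<integral>\<^sup>+n. ennreal (real n) \<partial>measure_pmf (poisson_pmf mu))"
    using assms by (intro enn2real_mono nn_integral_mono) (auto simp: nn_integral_poisson_pmf)
  also have "\<dots> = mu"
    using assms by (simp add: nn_integral_poisson_pmf)
  finally show ?thesis .
qed

lemma arrival_counts_sum_poisson:
  assumes "finite I" "S \<subseteq> I" "S \<noteq> {}" "\<forall>i\<in>I. 0 < lam i"
  shows "map_pmf (\<lambda>N. \<Sum>i\<in>S. N i) (arrival_counts I lam) = poisson_pmf (\<Sum>i\<in>S. lam i)"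
proof -
  have "map_pmf (\<lambda>N. \<Sum>i\<in>S. N i) (arrival_counts I lam)
      = map_pmf (\<lambda>N. \<Sum>i\<in>S. N i) (map_pmf (\<lambda>f x. if x \<in> S then f x else 0) (arrival_counts I lam))"
    by (simp add: pmf.map_comp o_def)
  also have "\<dots> = map_pmf (\<lambda>N. \<Sum>i\<in>S. N i) (Pi_pmf S 0 (\<lambda>i. poisson_pmf (lam i)))"
    unfolding arrival_counts_def using assms by (subst Pi_pmf_subset[of I S]) auto
  also have "\<dots> = poisson_pmf (\<Sum>i\<in>S. lam i)"
    using assms by (intro Pi_pmf_poisson_sum) (auto dest: finite_subset)
  finally show ?thesis .
qed

lemma poisson_cdf_zero_rate: "poisson_cdf k 0 = 1"
  by (induction k) (auto simp: poisson_cdf_def)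

lemma expectation_arrival_counts_min:
  assumes "finite I" "S \<subseteq> I" "\<forall>i\<in>I. 0 < lam i"
  shows "measure_pmf.expectation (arrival_counts I lam) (\<lambda>N. real (min (\<Sum>i\<in>S. N i) m))
           = (\<Sum>k=1..m. 1 - poisson_cdf (k - 1) (\<Sum>i\<in>S. lam i))"
proof (cases "S = {}")
  case True
  then show ?thesis
    by (simp add: poisson_cdf_zero_rate)
next
  case False
  have pos: "0 < (\<Sum>i\<in>S. lam i)"
    using assms False by (intro sum_pos) (auto dest: finite_subset)
  have "measure_pmf.expectation (arrival_counts I lam) (\<lambda>N. real (min (\<Sum>i\<in>S. N i) m))
      = measure_pmf.expectation (map_pmf (\<lambda>N. \<Sum>i\<in>S. N i) (arrival_counts I lam))
          (\<lambda>n. real (min n m))"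
    by simp
  also have "\<dots> = (\<Sum>k=1..m. 1 - poisson_cdf (k - 1) (\<Sum>i\<in>S. lam i))"
    using assms False pos
    by (simp add: arrival_counts_sum_poisson poisson_expectation_min)
  finally show ?thesis .
qed

definition edge_type :: "('i \<times> nat) \<times> 'j \<Rightarrow> 'i \<times> 'j" where
  "edge_type e = (fst (fst e), snd e)"

definition type_count :: "(('i \<times> nat) \<times> 'j) set \<Rightarrow> 'i \<Rightarrow> 'j \<Rightarrow> real" where
  "type_count M i j = real (card {e \<in> M. edge_type e = (i, j)})"

lemma finite_realized_edges:
  fixes N :: "'i \<Rightarrow> nat"
  assumes "finite E"
  shows "finite {((i, k), j). (i, j) \<in> E \<and> k < N i}"
proof -
  have "{((i, k), j). (i, j) \<in> E \<and> k < N i}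
      = (\<lambda>(p, k). ((fst p, k), snd p)) ` (SIGMA p:E. {..<N (fst p)})"
    by (force simp: image_iff)
  then show ?thesis
    using assms by simp
qed

lemma finite_realized_matchings:
  "finite E \<Longrightarrow> finite (realized_matchings E N)"
  unfolding realized_matchings_def
  by (rule finite_subset[OF _ finite_Pow_iff[THEN iffD2, OF finite_realized_edges]]) auto

lemma realized_matching_finite:
  "finite E \<Longrightarrow> M \<in> realized_matchings E N \<Longrightarrow> finite M"
  unfolding realized_matchings_def by (auto intro: finite_subset[OF _ finite_realized_edges])

lemma realized_matching_edge_type:
  "M \<in> realized_matchings E N \<Longrightarrow> e \<in> M \<Longrightarrow> edge_type e \<in> E"
  unfolding realized_matchings_def edge_type_def by auto

lemma max_weight_matching_attained:
  assumes "finite E"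
  obtains M where "M \<in> realized_matchings E N" "matching_weight w M = max_weight_matching E w N"
proof -
  have "{} \<in> realized_matchings E N"
    by (simp add: realized_matchings_def)
  then have "max_weight_matching E w N \<in> matching_weight w ` realized_matchings E N"
    unfolding max_weight_matching_def using assms
    by (intro Max_in finite_imageI finite_realized_matchings) auto
  then show ?thesis
    using that by auto
qed

lemma sum_type_count_le:
  assumes "finite E" "M \<in> realized_matchings E N" "finite S" "finite T"
  shows "(\<Sum>i\<in>S. \<Sum>j\<in>T. type_count M i j) \<le> real (min (\<Sum>i\<in>S. N i) (card T))"
proof -
  define A where "A = {e \<in> M. edge_type e \<in> S \<times> T}"
  have "finite A"
    using realized_matching_finite[OF assms(1,2)] by (simp add: A_def)
  have "(\<Sum>i\<in>S. \<Sum>j\<in>T. card {e \<in> M. edge_type e = (i, j)})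
      = (\<Sum>p\<in>S \<times> T. card {e \<in> A. edge_type e = p})"
    unfolding sum.cartesian_product A_def by (auto intro!: sum.cong arg_cong[where f = card])
  also have "\<dots> = (\<Sum>p\<in>S \<times> T. \<Sum>e\<in>{e \<in> A. edge_type e = p}. 1)"
    by simp
  also have "\<dots> = card A"
    using \<open>finite A\<close> assms(3,4) by (subst sum.group) (auto simp: A_def)
  finally have sum_eq: "(\<Sum>i\<in>S. \<Sum>j\<in>T. type_count M i j) = real (card A)"
    unfolding type_count_def by (metis (no_types, lifting) of_nat_sum sum.cong)
  have "card A \<le> card (SIGMA i:S. {..<N i})"
    using assms(2,3)
    by (intro card_inj_on_le[where f = fst])
      (auto simp: inj_on_def A_def realized_matchings_def edge_type_def)
  moreover have "card A \<le> card T"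
    using assms(2,4)
    by (intro card_inj_on_le[where f = snd])
      (auto simp: inj_on_def A_def realized_matchings_def edge_type_def)
  ultimately show ?thesis
    using assms(3) by (simp add: sum_eq)
qed

lemma matching_weight_eq_sum_type_count:
  assumes "finite E" "M \<in> realized_matchings E N"
  shows "matching_weight w M = (\<Sum>(i, j)\<in>E. w i j * type_count M i j)"
proof -
  define h where "h e = (case edge_type e of (i, j) \<Rightarrow> w i j)" for e :: "('a \<times> nat) \<times> 'b"
  have "matching_weight w M = (\<Sum>e\<in>M. h e)"
    unfolding matching_weight_def h_def edge_type_def by (intro sum.cong) (auto split: prod.splits)
  also have "\<dots> = (\<Sum>p\<in>E. \<Sum>e\<in>{e \<in> M. edge_type e = p}. h e)"
    using assms realized_matching_finite realized_matching_edge_type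
    by (intro sum.group[symmetric]) auto
  also have "\<dots> = (\<Sum>(i, j)\<in>E. w i j * type_count M i j)"
    unfolding type_count_def h_def by (intro sum.cong) (auto split: prod.splits)
  finally show ?thesis .
qed

lemma lp_objective_le_poisson_lp_opt:
  assumes "finite J" "E \<subseteq> I \<times> J" "\<forall>(i, j)\<in>E. 0 \<le> w i j"
    and "x \<in> poisson_lp_feasible I J E lam l"
  shows "lp_objective E w x \<le> poisson_lp_opt I J E w lam l"
  unfolding poisson_lp_opt_def
proof (rule cSUP_upper[OF assms(4)], rule bdd_aboveI2)
  fix y assume y: "y \<in> poisson_lp_feasible I J E lam l"
  have "w i j * y i j \<le> w i j * lam i" if "(i, j) \<in> E" for i j
  proof -
    have "i \<in> I" "j \<in> J"
      using that assms(2) by auto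
    then have "y i j \<le> (\<Sum>j'\<in>J. y i j')" "(\<Sum>j'\<in>J. y i j') \<le> lam i"
      using y assms(1) by (auto simp: poisson_lp_feasible_def intro!: member_le_sum)
    then show ?thesis
      using that assms(3) by (auto intro: mult_left_mono)
  qed
  then show "lp_objective E w y \<le> (\<Sum>(i, j)\<in>E. w i j * lam i)"
    unfolding lp_objective_def by (intro sum_mono) auto
qed

lemma integrable_type_count:
  assumes "finite E" "\<forall>N. M N \<in> realized_matchings E N"
  shows "integrable (measure_pmf P) (\<lambda>N. type_count (M N) i j)"
proof (rule measure_pmf.integrable_const_bound[where B = 1])
  show "AE N in measure_pmf P. norm (type_count (M N) i j) \<le> 1"
    using sum_type_count_le[OF assms(1), of "M _" _ "{i}" "{j}"] assms(2)
    by (auto simp: type_count_def)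
qed simp

lemma sum_expected_type_count_le:
  assumes "finite E" "\<forall>N. M N \<in> realized_matchings E N" "finite S" "finite T"
  shows "(\<Sum>i\<in>S. \<Sum>j\<in>T. measure_pmf.expectation P (\<lambda>N. type_count (M N) i j))
           \<le> measure_pmf.expectation P (\<lambda>N. real (min (\<Sum>i\<in>S. N i) (card T)))"
proof -
  have "(\<Sum>i\<in>S. \<Sum>j\<in>T. measure_pmf.expectation P (\<lambda>N. type_count (M N) i j))
      = measure_pmf.expectation P (\<lambda>N. \<Sum>i\<in>S. \<Sum>j\<in>T. type_count (M N) i j)"
    using assms(1,2)
    by (simp add: Bochner_Integration.integral_sum Bochner_Integration.integrable_sum
        integrable_type_count)
  also have "\<dots> \<le> measure_pmf.expectation P (\<lambda>N. real (min (\<Sum>i\<in>S. N i) (card T)))"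
    using assms
    by (intro integral_mono Bochner_Integration.integrable_sum integrable_type_count
        sum_type_count_le measure_pmf.integrable_const_bound[where B = "card T"]) auto
  finally show ?thesis .
qed

lemma expected_type_count_feasible:
  assumes "finite I" "finite J" "E \<subseteq> I \<times> J" "\<forall>i\<in>I. 0 < lam i"
    and "\<forall>N. M N \<in> realized_matchings E N"
  defines "x \<equiv> \<lambda>i j. measure_pmf.expectation (arrival_counts I lam) (\<lambda>N. type_count (M N) i j)"
  shows "x \<in> poisson_lp_feasible I J E lam l"
proof -
  have "finite E"
    using assms(1-3) finite_subset by blast
  have block_le:
    "(\<Sum>i\<in>S. \<Sum>j\<in>T. x i j) \<le> (\<Sum>k=1..card T. 1 - poisson_cdf (k - 1) (\<Sum>i\<in>S. lam i))"
    if "S \<subseteq> I" "T \<subseteq> J" for S T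
    using sum_expected_type_count_le[OF \<open>finite E\<close> assms(5)]
      expectation_arrival_counts_min[OF assms(1) that(1) assms(4)] that assms(1,2) finite_subset
    unfolding x_def by metis
  have nonneg: "0 \<le> x i j" for i j
    unfolding x_def type_count_def by simp
  have non_edge: "x i j = 0" if "(i, j) \<notin> E" for i j
  proof -
    have "{e \<in> M N. edge_type e = (i, j)} = {}" for N
      using realized_matching_edge_type assms(5) that by fastforce
    then show ?thesis
      unfolding x_def type_count_def by (simp only: card.empty) simp
  qed
  have row: "(\<Sum>j\<in>J. x i j) \<le> lam i" if "i \<in> I" for i
  proof -
    have "(\<Sum>j\<in>J. x i j) \<le> (\<Sum>k=1..card J. 1 - poisson_cdf (k - 1) (lam i))"
      using block_le[of "{i}" J] that by simp
    also have "\<dots> = measure_pmf.expectation (poisson_pmf (lam i)) (\<lambda>n. real (min n (card J)))"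
      using that assms(4) by (simp add: poisson_expectation_min)
    also have "\<dots> \<le> lam i"
      using that assms(4) by (simp add: poisson_expectation_min_le)
    finally show ?thesis .
  qed
  have column: "(\<Sum>i\<in>I. x i j) \<le> 1" if "j \<in> J" for j
  proof -
    have "(\<Sum>i\<in>I. x i j) \<le> 1 - poisson_cdf 0 (\<Sum>i\<in>I. lam i)"
      using block_le[of I "{j}"] that by simp
    also have "\<dots> \<le> 1"
      by (simp add: poisson_cdf_def)
    finally show ?thesis .
  qed
  show ?thesis
    unfolding poisson_lp_feasible_def using nonneg non_edge row column block_le by auto
qed

theorem mainTheorem7:
  fixes I :: "'i set" and J :: "'j set" and E :: "('i \<times> 'j) set"
    and w :: "'i \<Rightarrow> 'j \<Rightarrow> real" and lam :: "'i \<Rightarrow> real" and l :: nat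
  assumes "finite I" and "finite J" and "E \<subseteq> I \<times> J"
    and "\<forall>(i, j)\<in>E. w i j > 0"
    and "\<forall>i\<in>I. lam i > 0"
  shows "measure_pmf.expectation (arrival_counts I lam) (max_weight_matching E w)
           \<le> poisson_lp_opt I J E w lam l"
proof -
  have "finite E"
    using assms(1-3) finite_subset by blast
  have "\<exists>M. M \<in> realized_matchings E N \<and> matching_weight w M = max_weight_matching E w N" for N
    by (rule max_weight_matching_attained[OF \<open>finite E\<close>]) blast
  then obtain M where M: "\<forall>N. M N \<in> realized_matchings E N \<and> matching_weight w (M N) = max_weight_matching E w N"
    by metis
  define x where "x i j = measure_pmf.expectation (arrival_counts I lam) (\<lambda>N. type_count (M N) i j)" for i j
  have "max_weight_matching E w N = (\<Sum>(i, j)\<in>E. w i j * type_count (M N) i j)" for N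
    using M matching_weight_eq_sum_type_count[OF \<open>finite E\<close>, of "M N" N w] by simp
  then have "measure_pmf.expectation (arrival_counts I lam) (max_weight_matching E w)
      = measure_pmf.expectation (arrival_counts I lam) (\<lambda>N. \<Sum>(i, j)\<in>E. w i j * type_count (M N) i j)"
    by (intro Bochner_Integration.integral_cong) auto
  also have "\<dots> = lp_objective E w x"
    unfolding lp_objective_def x_def using M \<open>finite E\<close>
    by (simp add: case_prod_unfold Bochner_Integration.integral_sum integrable_type_count)
  also have "\<dots> \<le> poisson_lp_opt I J E w lam l"
    using assms M unfolding x_def
    by (intro lp_objective_le_poisson_lp_opt expected_type_count_feasible) auto
  finally show ?thesis .
qed

end
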